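(* The set $\{A\in\mathbb{A}\cap [e^{-e}, e^{1/e}] : h(A) \text{ is algebraic}\}$ is dense in $[e^{-e},e^{1/e}]$.
   Context: $\mathbb{A}$ denotes the set of algebraic numbers. For a real $x\in[e^{-e},e^{1/e}]$, the sequence $x,\ x^x,\ x^{x^x},\ldots$ converges; its limit is denoted $h(x)$, and it satisfies $h(x)=x^{h(x)}$, $1/e\leq h(x)\leq e$. *)

theory Defs
  imports "HOL-Analysis.Analysis" "HOL-Computational_Algebra.Polynomial"
begin

fun tower :: "real \<Rightarrow> nat \<Rightarrow> real" where
  "tower x 0 = x"
| "tower x (Suc n) = x powr (tower x n)"

text \<open>h(x): the limit of the power tower sequence (meaningful for x in [e^-e, e^(1/e)]).\<close>
definition h :: "real \<Rightarrow> real" where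
  "h x = lim (tower x)"

end

theory Submission
  imports Defs
begin

text \<open>
  For \<open>1/e < y < e\<close> put \<open>A = y powr (1/y)\<close>, so that \<open>A powr y = y\<close>. Near the fixed point \<open>y\<close>
  the map \<open>t \<mapsto> A powr t\<close> (for \<open>y \<ge> 1\<close>) or its second iterate (for \<open>y \<le> 1\<close>) is a contraction,
  so the tower at \<open>A\<close> converges to \<open>y\<close>, i.e. \<open>h A = y\<close>. For rational \<open>y\<close> both \<open>A\<close> and
  \<open>h A = y\<close> are algebraic. Since \<open>y \<mapsto> y powr (1/y)\<close> maps \<open>[1/e, e]\<close> continuously onto
  \<open>[e^-e, e^(1/e)]\<close>, the image of the rationals in \<open>(1/e, e)\<close> is dense there.
\<close>

lemma tendsto_of_periodic_contraction:
  fixes x :: "nat \<Rightarrow> 'a::metric_space"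
  assumes "0 < k" "0 \<le> c" "c < 1"
    and contr: "\<And>n. dist (x (n + k)) y \<le> c * dist (x n) y"
  shows "x \<longlonglongrightarrow> y"
proof -
  have iter: "dist (x (k * m + j)) y \<le> c ^ m * dist (x j) y" for m j
  proof (induction m)
    case (Suc m)
    have "dist (x (k * Suc m + j)) y \<le> c * dist (x (k * m + j)) y"
      using contr[of "k * m + j"] by (simp add: algebra_simps)
    also have "\<dots> \<le> c * (c ^ m * dist (x j) y)"
      using Suc \<open>0 \<le> c\<close> by (rule mult_left_mono)
    finally show ?case by simp
  qed simp
  define B where "B = (\<Sum>j<k. dist (x j) y)"
  have bound: "dist (x n) y \<le> c ^ (n div k) * B" for n
  proof -
    have "dist (x n) y \<le> c ^ (n div k) * dist (x (n mod k)) y"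
      using iter[of "n div k" "n mod k"] by simp
    also have "\<dots> \<le> c ^ (n div k) * B"
      unfolding B_def using \<open>0 < k\<close> \<open>0 \<le> c\<close>
      by (intro mult_left_mono member_le_sum) auto
    finally show ?thesis .
  qed
  have "(\<lambda>n. c ^ (n div k)) \<longlonglongrightarrow> 0"
    using assms(1-3) by (intro filterlim_compose[OF LIMSEQ_power_zero filterlim_at_top_div_const_nat]) auto
  then have "(\<lambda>n. c ^ (n div k) * B) \<longlonglongrightarrow> 0"
    by (rule tendsto_mult_left_zero)
  then have "(\<lambda>n. dist (x n) y) \<longlonglongrightarrow> 0"
    by (rule Lim_null_comparison[rotated]) (simp add: bound)
  then show ?thesis
    by (rule tendsto_dist_iff[THEN iffD2])
qed

lemma mult_exp_neg_le: "x * exp (- x) \<le> exp (- 1 :: real)"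
proof -
  have "x \<le> exp (x - 1)"
    using exp_ge_add_one_self[of "x - 1"] by simp
  then have "x * exp (- x) \<le> exp (x - 1) * exp (- x)"
    by (rule mult_right_mono) simp
  then show ?thesis
    by (simp flip: exp_add)
qed

lemma tower_powr_inverse_self_Suc:
  assumes "0 < y"
  shows "tower (y powr (1/y)) (Suc n) = exp (ln y / y * tower (y powr (1/y)) n)"
  using assms by (simp add: powr_def)

lemma tendsto_tower_powr_inverse_self_ge1:
  assumes "1 \<le> y" "y < exp 1"
  shows "tower (y powr (1/y)) \<longlonglongrightarrow> y"
proof -
  define A where "A = y powr (1/y)"
  define a where "a = ln y / y"
  have y0: "0 < y" using assms by simp
  have ln_y: "0 \<le> ln y" "ln y < 1"
    using assms ln_less_cancel_iff[of y "exp 1"] by auto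
  have a0: "0 \<le> a" using ln_y y0 by (simp add: a_def)
  have ay: "a * y = ln y" using y0 by (simp add: a_def)
  have step: "tower A (Suc n) = exp (a * tower A n)" for n
    unfolding A_def a_def by (rule tower_powr_inverse_self_Suc[OF y0])
  have mono: "exp (a * s) \<le> y" if "s \<le> y" for s
    using mult_left_mono[OF that a0] ay y0 by (metis exp_le_cancel_iff exp_ln)
  text \<open>Below \<open>y\<close> the derivative \<open>a exp (a t)\<close> of the step map is at most \<open>a y = ln y < 1\<close>.\<close>
  have below: "tower A n \<le> y" for n
  proof (induction n)
    case 0
    have "tower A 0 = exp (a * 1)" using y0 by (simp add: A_def a_def powr_def)
    then show ?case using mono[of 1] assms(1) by simp
  next
    case (Suc n)
    then show ?case unfolding step by (rule mono)
  qed
  have lipschitz: "\<bar>exp (a * s) - y\<bar> \<le> ln y * \<bar>s - y\<bar>" if "s \<le> y" for s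
  proof -
    have "norm (exp (a * s) - exp (a * y)) \<le> ln y * norm (s - y)"
    proof (rule field_differentiable_bound[of "{..y}"])
      fix t assume "t \<in> {..y}"
      show "((\<lambda>t. exp (a * t)) has_field_derivative exp (a * t) * a) (at t within {..y})"
        by (auto intro!: derivative_eq_intros)
      have "exp (a * t) * a \<le> exp (a * y) * a"
        using \<open>t \<in> {..y}\<close> a0 by (intro mult_right_mono) (auto intro: mult_left_mono)
      moreover have "exp (a * y) * a = ln y"
        using ay y0 by (simp add: mult.commute)
      ultimately show "norm (exp (a * t) * a) \<le> ln y"
        using a0 by simp
    qed (use that in auto)
    then show ?thesis using ay y0 by simp
  qed
  have "tower A \<longlonglongrightarrow> y"
  proof (rule tendsto_of_periodic_contraction[of 1 "ln y"])
    show "dist (tower A (n + 1)) y \<le> ln y * dist (tower A n) y" for n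
      using lipschitz[OF below] by (simp add: step dist_real_def del: tower.simps)
  qed (use ln_y in auto)
  then show ?thesis by (simp add: A_def)
qed

lemma tendsto_tower_powr_inverse_self_le1:
  assumes "exp (- 1) < y" "y \<le> 1"
  shows "tower (y powr (1/y)) \<longlonglongrightarrow> y"
proof -
  define A where "A = y powr (1/y)"
  define a where "a = ln y / y"
  define c where "c = - a * exp (- 1)"
  text \<open>The step map need not contract (\<open>-a\<close> may exceed 1), but its square does: its
    derivative is \<open>-a * (q * exp (- q)) \<le> -a / e\<close> with \<open>q = -a exp (a t)\<close>.\<close>
  define g where "g t = exp (a * exp (a * t))" for t
  have y0: "0 < y" using assms(1) by (metis exp_gt_zero less_trans)
  have ay: "a * y = ln y" using y0 by (simp add: a_def)
  have a0: "a \<le> 0" using assms y0 by (simp add: a_def divide_nonpos_pos)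
  have "- ln y < 1"
    using assms(1) y0 ln_less_cancel_iff[of "exp (- 1)" y] by simp
  also have "1 < exp 1 * y"
    using assms(1) by (simp add: exp_minus field_simps)
  finally have "- a < exp 1"
    using y0 by (simp add: a_def field_simps)
  then have c: "0 \<le> c" "c < 1"
    using a0 by (auto simp: c_def exp_minus field_simps)
  have step1: "tower A (Suc n) = exp (a * tower A n)" for n
    unfolding A_def a_def by (rule tower_powr_inverse_self_Suc[OF y0])
  have step: "tower A (Suc (Suc n)) = g (tower A n)" for n
    using step1[of "Suc n"] step1[of n] by (simp add: g_def del: tower.simps)
  have gy: "g y = y" using ay y0 by (simp add: g_def)
  have lipschitz: "\<bar>g s - y\<bar> \<le> c * \<bar>s - y\<bar>" for s
  proof -
    have "norm (g s - g y) \<le> c * norm (s - y)"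
    proof (rule field_differentiable_bound[of UNIV])
      fix t
      define q where "q = - a * exp (a * t)"
      show "(g has_field_derivative g t * (a * (exp (a * t) * a))) (at t within UNIV)"
        unfolding g_def by (auto intro!: derivative_eq_intros)
      have "g t * (a * (exp (a * t) * a)) = - a * (q * exp (- q))"
        by (simp add: g_def q_def)
      moreover have "0 \<le> q" using a0 by (simp add: q_def mult_nonpos_nonneg)
      ultimately show "norm (g t * (a * (exp (a * t) * a))) \<le> c"
        using a0 mult_exp_neg_le[of q] by (auto simp: c_def abs_mult intro: mult_left_mono_neg)
    qed auto
    then show ?thesis using gy by simp
  qed
  have "tower A \<longlonglongrightarrow> y"
    by (rule tendsto_of_periodic_contraction[of 2 c])
       (use c lipschitz in \<open>simp_all add: step dist_real_def del: tower.simps\<close>)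
  then show ?thesis by (simp add: A_def)
qed

lemma tendsto_tower_powr_inverse_self:
  assumes "exp (- 1) < y" "y < exp 1"
  shows "tower (y powr (1/y)) \<longlonglongrightarrow> y"
  using assms tendsto_tower_powr_inverse_self_le1 tendsto_tower_powr_inverse_self_ge1
  by (cases "y \<le> 1") auto

lemma h_powr_inverse_self:
  assumes "exp (- 1) < y" "y < exp 1"
  shows "h (y powr (1/y)) = y"
  unfolding h_def using tendsto_tower_powr_inverse_self[OF assms] by (rule limI)

lemma algebraic_powr_Rats:
  fixes x r :: real
  assumes "x \<in> \<rat>" "0 < x" "r \<in> \<rat>"
  shows "algebraic (x powr r)"
proof -
  obtain p q :: int where pq: "0 < q" "r = of_int p / of_int q"
    using Rats_cases'[OF assms(3)] by metis
  have "x powr r = (x powr of_int p) powr (1 / real (nat q))"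
    using pq by (simp add: powr_powr)
  also have "\<dots> = root (nat q) (x powr of_int p)"
    using pq by (simp add: root_powr_inverse)
  finally have root: "x powr r = root (nat q) (x powr of_int p)" .
  have "x powr of_int p \<in> \<rat>"
    using assms(1,2) by (simp add: powr_real_of_int)
  then show ?thesis
    unfolding root by (intro algebraic_nth_root_real rat_imp_algebraic)
qed

lemma powr_inverse_self_bounds:
  fixes y :: real
  assumes "exp (- 1) \<le> y"
  shows "y powr (1/y) \<in> {exp (- exp 1) .. exp (1 / exp 1)}"
proof -
  have y0: "0 < y" using assms by (metis exp_gt_zero less_le_trans)
  have "- 1 \<le> ln y"
    using assms y0 ln_le_cancel_iff[of "exp (- 1)" y] by simp
  moreover have "1 \<le> exp 1 * y"
    using assms by (simp add: exp_minus field_simps)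
  ultimately have lower: "- exp 1 \<le> ln y / y"
    using y0 by (simp add: le_divide_eq)
  have "ln (y / exp 1) \<le> y / exp 1 - 1"
    using y0 by (intro ln_le_minus_one) auto
  then have upper: "ln y / y \<le> 1 / exp 1"
    using y0 by (simp add: ln_div field_simps)
  show ?thesis
    using y0 lower upper by (simp add: powr_def)
qed

lemma continuous_on_powr_inverse_self:
  fixes a b :: real
  assumes "0 < a"
  shows "continuous_on {a..b} (\<lambda>y. y powr (1/y))"
  using assms by (intro continuous_intros) auto

lemma powr_inverse_self_image:
  "{exp (- exp 1) .. exp (1 / exp 1)} \<subseteq> (\<lambda>y::real. y powr (1/y)) ` {exp (- 1) .. exp 1}"
proof
  fix x :: real assume x: "x \<in> {exp (- exp 1) .. exp (1 / exp 1)}"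
  have "continuous_on {exp (- 1) .. exp 1} (\<lambda>y::real. y powr (1/y))"
    by (rule continuous_on_powr_inverse_self[OF exp_gt_zero])
  moreover have "exp (- 1) powr (1 / exp (- 1)) = exp (- exp (1::real))"
  proof -
    have "1 / exp (- 1) = exp (1::real)"
      by (simp add: exp_minus divide_inverse)
    then have "exp (- 1) powr (1 / exp (- 1)) = exp (- 1 * exp (1::real))"
      by (simp only: exp_powr_real)
    then show ?thesis by simp
  qed
  moreover have "exp 1 powr (1 / exp 1) = exp (1 / exp (1::real))"
    by (simp add: exp_powr_real)
  ultimately show "x \<in> (\<lambda>y. y powr (1/y)) ` {exp (- 1) .. exp 1}"
    using x IVT'[of "\<lambda>y. y powr (1/y)" "exp (- 1)" x "exp 1"] by force
qed

lemma closure_Int_Rats_open: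
  fixes U :: "real set"
  assumes "open U"
  shows "closure (U \<inter> \<rat>) = closure U"
proof
  have "U \<subseteq> closure (U \<inter> \<rat>)"
    using open_Int_closure_subset[OF assms, of \<rat>] by (simp add: Rats_closure_real)
  then show "closure U \<subseteq> closure (U \<inter> \<rat>)"
    by (simp add: closure_minimal)
qed (simp add: closure_mono)

theorem theorem2p4:
  shows "{exp (- exp 1) .. exp (1 / exp 1)} \<subseteq>
    closure {A :: real. algebraic A \<and> A \<in> {exp (- exp 1) .. exp (1 / exp 1)} \<and> algebraic (h A)}"
    (is "_ \<subseteq> closure ?S")
proof -
  define R :: "real set" where "R = {exp (- 1) <..< exp 1} \<inter> \<rat>"
  have "(\<lambda>y. y powr (1/y)) ` R \<subseteq> ?S"
  proof
    fix A assume "A \<in> (\<lambda>y. y powr (1/y)) ` R"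
    then obtain y where y: "exp (- 1) < y" "y < exp 1" "y \<in> \<rat>" and A: "A = y powr (1/y)"
      by (auto simp: R_def)
    have "0 < y" using y(1) by (metis exp_gt_zero less_trans)
    have "algebraic A"
      unfolding A using y(3) \<open>0 < y\<close> by (intro algebraic_powr_Rats) auto
    moreover have "A \<in> {exp (- exp 1) .. exp (1 / exp 1)}"
      unfolding A using y(1) by (intro powr_inverse_self_bounds) simp
    moreover have "algebraic (h A)"
      unfolding A h_powr_inverse_self[OF y(1,2)] using y(3) by (rule rat_imp_algebraic)
    ultimately show "A \<in> ?S" by simp
  qed
  moreover have "closure R = {exp (- 1) .. exp 1}"
    by (simp add: R_def closure_Int_Rats_open)
  moreover have "continuous_on {exp (- 1) .. exp 1} (\<lambda>y::real. y powr (1/y))"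
    by (rule continuous_on_powr_inverse_self[OF exp_gt_zero])
  ultimately have "(\<lambda>y. y powr (1/y)) ` {exp (- 1) .. exp 1} \<subseteq> closure ?S"
    using image_closure_subset[of R "\<lambda>y. y powr (1/y)" "closure ?S"] closure_subset[of ?S]
    by auto
  then show ?thesis
    using powr_inverse_self_image by blast
qed

end
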